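(* Let $G$ be a simple connected graph with $n$ vertices and $m$ edges, let $k\ge1$ be an integer, let $S_k(G)$ be the $k$-parallel subdivision graph of $G$, and let $N$ be the set of new (subdivision) vertices of $S_k(G)$. Let $i\neq j$ be vertices of $S_k(G)$. Then: (1) If $i,j\in V(G)$, then $\Omega_{ij}(S_k(G))=\frac{2}{k}\Omega_{ij}(G)$. (2) If $i\in N$, $j\in V(G)$ and the neighbours of $i$ in $S_k(G)$ are $s,t$, then $\Omega_{ij}(S_k(G))=\frac{k+2\Omega_{sj}(G)+2\Omega_{tj}(G)-\Omega_{st}(G)}{2k}$. (3) If $i,j\in N$, the neighbours of $i$ are $s,t$ and the neighbours of $j$ are $p,q$, then $\Omega_{ij}(S_k(G))=\frac{2k+\Omega_{sp}(G)+\Omega_{sq}(G)+\Omega_{tp}(G)+\Omega_{tq}(G)-\Omega_{pq}(G)-\Omega_{st}(G)}{2k}$.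
   Context: The $k$-parallel subdivision graph $S_k(G)$ is obtained from $G$ by replacing each edge $uv$ of $G$ by $k$ internally disjoint paths $u-w-v$ of length $2$ (each with its own new middle vertex $w$, whose neighbours are $u$ and $v$). $\Omega_{ab}(H)$ denotes the resistance distance between vertices $a,b$ of a connected graph $H$, i.e. the effective resistance between $a$ and $b$ when each edge of $H$ is a unit resistor ($\Omega_{aa}(H)=0$). *)

theory Defs
  imports Main "HOL.Real"
begin

definition simple_graph :: "'a set \<Rightarrow> ('a \<Rightarrow> 'a \<Rightarrow> bool) \<Rightarrow> bool" where
  "simple_graph V E \<longleftrightarrow> finite V \<and> (\<forall>u v. E u v \<longrightarrow> u \<in> V \<and> v \<in> V)
     \<and> (\<forall>u v. E u v \<longrightarrow> E v u) \<and> (\<forall>u. \<not> E u u)"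

definition connected_graph :: "'a set \<Rightarrow> ('a \<Rightarrow> 'a \<Rightarrow> bool) \<Rightarrow> bool" where
  "connected_graph V E \<longleftrightarrow> V \<noteq> {} \<and> (\<forall>u\<in>V. \<forall>v\<in>V. E\<^sup>*\<^sup>* u v)"

definition laplacian :: "'a set \<Rightarrow> ('a \<Rightarrow> 'a \<Rightarrow> bool) \<Rightarrow> ('a \<Rightarrow> real) \<Rightarrow> 'a \<Rightarrow> real" where
  "laplacian V E x u = (\<Sum>v\<in>{v\<in>V. E u v}. x u - x v)"

text \<open>Resistance distance (effective resistance with unit resistors): inject a unit
  current at a and extract it at b; by Kirchhoff's laws the vertex potentials x satisfy
  L x = e_a - e_b, and the resistance is the potential difference x a - x b
  (well defined on a connected graph, since x is unique up to an additive constant).\<close>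
definition resistance :: "'a set \<Rightarrow> ('a \<Rightarrow> 'a \<Rightarrow> bool) \<Rightarrow> 'a \<Rightarrow> 'a \<Rightarrow> real" where
  "resistance V E a b =
     (let x = (SOME x. \<forall>u\<in>V. laplacian V E x u =
                  (if u = a then 1 else 0) - (if u = b then 1 else 0))
      in x a - x b)"

definition graph_edges :: "'a set \<Rightarrow> ('a \<Rightarrow> 'a \<Rightarrow> bool) \<Rightarrow> 'a set set" where
  "graph_edges V E = {{u, v} | u v. E u v}"

text \<open>k-parallel subdivision graph S_k(G): old vertices Inl u; for each edge e of G
  and each r < k a new vertex Inr (e, r) adjacent exactly to the two ends of e.\<close>
definition sk_new :: "'a set \<Rightarrow> ('a \<Rightarrow> 'a \<Rightarrow> bool) \<Rightarrow> nat \<Rightarrow> ('a + 'a set \<times> nat) set" where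
  "sk_new V E k = {Inr (e, r) | e r. e \<in> graph_edges V E \<and> r < k}"

definition sk_verts :: "'a set \<Rightarrow> ('a \<Rightarrow> 'a \<Rightarrow> bool) \<Rightarrow> nat \<Rightarrow> ('a + 'a set \<times> nat) set" where
  "sk_verts V E k = Inl ` V \<union> sk_new V E k"

fun sk_adj :: "'a set \<Rightarrow> ('a \<Rightarrow> 'a \<Rightarrow> bool) \<Rightarrow> nat \<Rightarrow> ('a + 'a set \<times> nat) \<Rightarrow> ('a + 'a set \<times> nat) \<Rightarrow> bool" where
  "sk_adj V E k (Inl u) (Inr (e, r)) = (e \<in> graph_edges V E \<and> r < k \<and> u \<in> e)"
| "sk_adj V E k (Inr (e, r)) (Inl u) = (e \<in> graph_edges V E \<and> r < k \<and> u \<in> e)"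
| "sk_adj V E k _ _ = False"

end

(* A potential p on G lifts to S_k(G) by placing each new vertex at the mean of the potentials
   of its two ends (raised by 1/2 if it is the source of the current, lowered by 1/2 if it is
   the sink); at an old vertex the Laplacian of the lift is k/2 times that of p. Hence the unit
   current from i to j in S_k(G) corresponds to the current (2/k)(sigma_i - sigma_j) in G, where
   sigma_w is the unit mass at w for an old vertex w and half a unit at each end of a new vertex
   w. Splitting this current into two unit currents of G and expressing potential differences
   of unit currents through effective resistances (by reciprocity, i.e. the symmetry of the
   Laplacian) gives a single formula for all pairs i, j, of which the three cases are
   instances. *)

theory Submission
  imports Defs "HOL.Vector_Spaces" "HOL-Library.Function_Algebras"
begin

context vector_space
begin

lemma linear_inj_on_imp_surj_on:
  assumes lin: "Vector_Spaces.linear scale scale f" and S: "subspace S"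
    and span_W: "S \<subseteq> span W" and W: "finite W"
    and into: "f ` S \<subseteq> S" and inj: "inj_on f S"
  shows "f ` S = S"
proof -
  interpret f: Vector_Spaces.linear scale scale f by (fact lin)
  obtain B where B: "B \<subseteq> S" "independent B" "S \<subseteq> span B"
    using basis_exists by metis
  have B_fin: "finite B"
    using independent_span_bound[OF W B(2)] B(1) span_W by blast
  have span_B: "span B = S"
    using B span_minimal[OF B(1) S] by blast
  have inj_B: "inj_on f (span B)"
    using inj span_B by simp
  have fB_indep: "independent (f ` B)"
    using f.dependent_inj_imageD[OF _ inj_B] B(2) by metis
  have fB_card: "card (f ` B) = card B"
    using card_image inj_on_subset[OF inj_B span_superset] by metis
  have fB_span: "f ` B \<subseteq> span B"
    using B(1) into span_B by blast
  have "B \<subseteq> span (f ` B)"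
  proof
    fix b assume b: "b \<in> B"
    show "b \<in> span (f ` B)"
    proof (rule ccontr)
      assume b_out: "b \<notin> span (f ` B)"
      then have "b \<notin> f ` B" using span_base by metis
      then have "card (insert b (f ` B)) = Suc (card B)"
        using B_fin fB_card by simp
      moreover have "card (insert b (f ` B)) \<le> card B"
        using independent_span_bound[OF B_fin independent_insertI[OF b_out fB_indep]]
          fB_span b span_base by blast
      ultimately show False by simp
    qed
  qed
  then have "S \<subseteq> span (f ` B)"
    using span_B span_minimal subspace_span by metis
  also have "\<dots> = f ` S"
    using f.span_image span_B by simp
  finally show ?thesis using into by blast
qed

end

lemma sum_fun_apply: "sum f A x = (\<Sum>a\<in>A. f a x)"
  by (induction A rule: infinite_finite_induct) auto

lemma linear_inj_on_imp_surj_on_finite_support: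
  fixes V :: "'a set" and T :: "('a \<Rightarrow> real) \<Rightarrow> 'a \<Rightarrow> real"
  defines "S \<equiv> {f. \<forall>u. u \<notin> V \<longrightarrow> f u = 0}"
  assumes "finite V"
    and add: "\<And>f g. T (\<lambda>u. f u + g u) = (\<lambda>u. T f u + T g u)"
    and scale: "\<And>c f. T (\<lambda>u. c * f u) = (\<lambda>u. c * T f u)"
    and into: "T ` S \<subseteq> S" and inj: "inj_on T S"
  shows "T ` S = S"
proof -
  define sc :: "real \<Rightarrow> ('a \<Rightarrow> real) \<Rightarrow> 'a \<Rightarrow> real" where "sc c f = (\<lambda>u. c * f u)" for c f
  interpret F: vector_space sc
    by unfold_locales (auto simp: sc_def fun_eq_iff algebra_simps)
  have linear: "Vector_Spaces.linear sc sc T"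
    unfolding Vector_Spaces.linear_iff
    using F.vector_space_axioms add scale by (simp add: sc_def plus_fun_def)
  have subspace: "F.subspace S"
    by (rule F.subspaceI) (auto simp: S_def sc_def)
  have "S \<subseteq> F.span ((\<lambda>v u. if u = v then 1 else 0) ` V)"
  proof
    fix f assume "f \<in> S"
    then have "f = (\<Sum>v\<in>V. sc (f v) (\<lambda>u. if u = v then 1 else 0))"
      using \<open>finite V\<close>
      by (auto simp: S_def sc_def fun_eq_iff sum_fun_apply if_distrib cong: if_cong)
    also have "\<dots> \<in> F.span ((\<lambda>v u. if u = v then 1 else 0) ` V)"
      by (intro F.span_sum F.span_scale F.span_base) auto
    finally show "f \<in> F.span ((\<lambda>v u. if u = v then 1 else 0) ` V)" .
  qed
  with \<open>finite V\<close> show ?thesis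
    using F.linear_inj_on_imp_surj_on[OF linear subspace _ _ into inj] by blast
qed

lemma laplacian_add: "laplacian V E (\<lambda>u. x u + y u) u = laplacian V E x u + laplacian V E y u"
  unfolding laplacian_def sum.distrib[symmetric] by (rule sum.cong) auto

lemma laplacian_diff: "laplacian V E (\<lambda>u. x u - y u) u = laplacian V E x u - laplacian V E y u"
  unfolding laplacian_def sum_subtractf[symmetric] by (rule sum.cong) auto

lemma laplacian_cmult: "laplacian V E (\<lambda>u. c * x u) u = c * laplacian V E x u"
  unfolding laplacian_def sum_distrib_left by (rule sum.cong) (auto simp: algebra_simps)

lemma laplacian_const: "laplacian V E (\<lambda>_. c) u = 0"
  by (simp add: laplacian_def)

lemma laplacian_self_adjoint:
  assumes "finite V" and "symp E"
  shows "(\<Sum>u\<in>V. x u * laplacian V E y u) = (\<Sum>u\<in>V. laplacian V E x u * y u)"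
proof -
  have expand: "(\<Sum>u\<in>V. f u * laplacian V E g u)
      = (\<Sum>u\<in>V. \<Sum>v\<in>V. if E u v then f u * g u else 0)
      - (\<Sum>u\<in>V. \<Sum>v\<in>V. if E u v then f u * g v else 0)" for f g :: "'a \<Rightarrow> real"
    unfolding laplacian_def sum_subtractf[symmetric] sum_distrib_left
    using \<open>finite V\<close> by (simp add: sum.inter_filter algebra_simps if_distrib cong: if_cong)
  have swap: "(\<Sum>u\<in>V. \<Sum>v\<in>V. if E u v then y u * x v else 0)
      = (\<Sum>u\<in>V. \<Sum>v\<in>V. if E u v then x u * y v else 0)"
    using \<open>symp E\<close> by (subst sum.swap) (auto intro!: sum.cong simp: symp_def mult.commute)
  have diagonal: "(\<Sum>u\<in>V. \<Sum>v\<in>V. if E u v then y u * x u else 0)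
      = (\<Sum>u\<in>V. \<Sum>v\<in>V. if E u v then x u * y u else 0)"
    by (intro sum.cong) (auto simp: mult.commute)
  show ?thesis
    using expand[of x y] expand[of y x] swap diagonal by (simp add: mult.commute)
qed

lemma laplacian_sum_eq_0:
  assumes "finite V" and "symp E"
  shows "(\<Sum>u\<in>V. laplacian V E x u) = 0"
  using laplacian_self_adjoint[OF assms, of "\<lambda>_. 1" x] by (simp add: laplacian_const)

definition is_unit_potential ::
    "'a set \<Rightarrow> ('a \<Rightarrow> 'a \<Rightarrow> bool) \<Rightarrow> 'a \<Rightarrow> 'a \<Rightarrow> ('a \<Rightarrow> real) \<Rightarrow> bool"
  where "is_unit_potential V E a b x \<longleftrightarrow>
    (\<forall>u\<in>V. laplacian V E x u = (if u = a then 1 else 0) - (if u = b then 1 else 0))"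

lemma resistance_self [simp]: "resistance V E a a = 0"
  by (simp add: resistance_def Let_def)

locale resistor_network =
  fixes V :: "'a set" and E :: "'a \<Rightarrow> 'a \<Rightarrow> bool"
  assumes simple: "simple_graph V E" and connected: "connected_graph V E"
begin

lemma finite_vertices: "finite V"
  using simple by (simp add: simple_graph_def)

lemma edge_in_vertices: "E u v \<Longrightarrow> v \<in> V"
  using simple by (simp add: simple_graph_def)

lemma symp_edges: "symp E"
  using simple by (simp add: simple_graph_def symp_def)

lemma harmonic_imp_constant:
  assumes harmonic: "\<forall>u\<in>V. laplacian V E z u = 0" and "a \<in> V" "b \<in> V"
  shows "z a = z b"
proof -
  define M where "M = Max (z ` V)"
  have "M \<in> z ` V"
    unfolding M_def using finite_vertices \<open>a \<in> V\<close> by (intro Max_in) auto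
  then obtain m where m: "m \<in> V" "z m = M"
    by auto
  have le_M: "z v \<le> M" if "v \<in> V" for v
    using finite_vertices that unfolding M_def by simp
  have "v \<in> V \<and> z v = M" if "E\<^sup>*\<^sup>* m v" for v
    using that
  proof (induction rule: rtranclp_induct)
    case base
    show ?case using m by simp
  next
    case (step w v)
    have "laplacian V E z w = 0"
      using harmonic step.IH by blast
    then have "(\<Sum>x\<in>{x\<in>V. E w x}. z w - z x) = 0"
      unfolding laplacian_def .
    moreover have "\<forall>x\<in>{x\<in>V. E w x}. 0 \<le> z w - z x"
      using le_M step.IH by auto
    ultimately have "\<forall>x\<in>{x\<in>V. E w x}. z w - z x = 0"
      using sum_nonneg_eq_0_iff[of "{x\<in>V. E w x}" "\<lambda>x. z w - z x"] finite_vertices by simp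
    moreover have "v \<in> V"
      using step.hyps(2) by (rule edge_in_vertices)
    ultimately show ?case
      using step.hyps(2) step.IH by auto
  qed
  moreover have "E\<^sup>*\<^sup>* m a" "E\<^sup>*\<^sup>* m b"
    using connected m(1) \<open>a \<in> V\<close> \<open>b \<in> V\<close> unfolding connected_graph_def by blast+
  ultimately show ?thesis
    by metis
qed

lemma unit_potential_unique:
  assumes "is_unit_potential V E a b x" "is_unit_potential V E a b y" "c \<in> V" "d \<in> V"
  shows "x c - x d = y c - y d"
proof -
  have "\<forall>u\<in>V. laplacian V E (\<lambda>u. x u - y u) u = 0"
    using assms(1,2) by (simp add: is_unit_potential_def laplacian_diff)
  from harmonic_imp_constant[OF this assms(3,4)] show ?thesis by simp
qed

lemma resistance_eq:
  assumes "is_unit_potential V E a b x" "a \<in> V" "b \<in> V"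
  shows "resistance V E a b = x a - x b"
proof -
  let ?y = "SOME y. is_unit_potential V E a b y"
  have "is_unit_potential V E a b ?y"
    using someI[of "is_unit_potential V E a b"] assms(1) by blast
  then have "?y a - ?y b = x a - x b"
    using unit_potential_unique assms by blast
  moreover have "resistance V E a b = ?y a - ?y b"
    unfolding resistance_def is_unit_potential_def Let_def ..
  ultimately show ?thesis
    by simp
qed

lemma unit_potential_exists:
  assumes "a \<in> V" "b \<in> V"
  shows "\<exists>x. is_unit_potential V E a b x"
proof -
  define S where "S = {f :: 'a \<Rightarrow> real. \<forall>u. u \<notin> V \<longrightarrow> f u = 0}"
  \<comment> \<open>Grounding the vertex a makes the Laplacian injective on functions supported on V.\<close>
  define T where "T f u = (if u \<in> V then laplacian V E f u + (if u = a then f a else 0) else 0)"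
    for f :: "'a \<Rightarrow> real" and u
  have sum_T: "(\<Sum>u\<in>V. T f u) = f a" for f
    using laplacian_sum_eq_0[OF finite_vertices symp_edges] finite_vertices \<open>a \<in> V\<close>
    by (simp add: T_def sum.distrib)
  have inj: "inj_on T S"
  proof (rule inj_onI)
    fix f g assume f: "f \<in> S" and g: "g \<in> S" and eq: "T f = T g"
    have "f a = g a"
      using sum_T[of f] sum_T[of g] eq by simp
    then have "laplacian V E (\<lambda>u. f u - g u) u = 0" if "u \<in> V" for u
      using fun_cong[OF eq, of u] that by (simp add: T_def laplacian_diff split: if_splits)
    then have const: "f u - g u = f a - g a" if "u \<in> V" for u
      using harmonic_imp_constant[of "\<lambda>u. f u - g u", OF _ that \<open>a \<in> V\<close>] by blast
    show "f = g"
    proof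
      fix u
      show "f u = g u"
        using f g \<open>f a = g a\<close> const[of u] by (cases "u \<in> V") (auto simp: S_def)
    qed
  qed
  have add: "T (\<lambda>u. f u + g u) = (\<lambda>u. T f u + T g u)" for f g
    by (simp add: T_def fun_eq_iff laplacian_add)
  have scale: "T (\<lambda>u. c * f u) = (\<lambda>u. c * T f u)" for c f
    by (simp add: T_def fun_eq_iff laplacian_cmult distrib_left)
  have "T ` S \<subseteq> S"
    by (auto simp: S_def T_def)
  then have "T ` S = S"
    using linear_inj_on_imp_surj_on_finite_support[of V T, OF finite_vertices add scale] inj
    unfolding S_def by blast
  define y :: "'a \<Rightarrow> real"
    where "y u = (if u \<in> V then (if u = a then 1 else 0) - (if u = b then 1 else 0) else 0)" for u
  have "y \<in> S"
    by (simp add: y_def S_def)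
  then obtain x where Tx: "T x = y"
    using \<open>T ` S = S\<close> by (metis imageE)
  have "x a = 0"
    using sum_T[of x] Tx finite_vertices \<open>a \<in> V\<close> \<open>b \<in> V\<close>
    by (simp add: y_def sum_subtractf)
  have "is_unit_potential V E a b x"
    unfolding is_unit_potential_def
  proof
    fix u assume "u \<in> V"
    with fun_cong[OF Tx, of u] \<open>x a = 0\<close>
    show "laplacian V E x u = (if u = a then 1 else 0) - (if u = b then 1 else 0)"
      by (simp add: T_def y_def split: if_splits)
  qed
  then show ?thesis by blast
qed

lemma unit_potential_reciprocity:
  assumes x: "is_unit_potential V E a b x" and y: "is_unit_potential V E c d y"
    and "a \<in> V" "b \<in> V" "c \<in> V" "d \<in> V"
  shows "x c - x d = y a - y b"
proof -
  have "(\<Sum>u\<in>V. x u * laplacian V E y u)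
      = (\<Sum>u\<in>V. x u * ((if u = c then 1 else 0) - (if u = d then 1 else 0)))"
    using y by (simp add: is_unit_potential_def)
  also have "\<dots> = x c - x d"
    using finite_vertices \<open>c \<in> V\<close> \<open>d \<in> V\<close>
    by (simp add: right_diff_distrib sum_subtractf if_distrib[of "times _"] cong: if_cong)
  finally have left: "(\<Sum>u\<in>V. x u * laplacian V E y u) = x c - x d" .
  have "(\<Sum>u\<in>V. laplacian V E x u * y u)
      = (\<Sum>u\<in>V. ((if u = a then 1 else 0) - (if u = b then 1 else 0)) * y u)"
    using x by (simp add: is_unit_potential_def)
  also have "\<dots> = y a - y b"
    using finite_vertices \<open>a \<in> V\<close> \<open>b \<in> V\<close>
    by (simp add: left_diff_distrib sum_subtractf if_distrib[of "\<lambda>z. z * _"] cong: if_cong)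
  finally show ?thesis
    using left laplacian_self_adjoint[OF finite_vertices symp_edges] by simp
qed

lemma resistance_commute:
  assumes "a \<in> V" "b \<in> V"
  shows "resistance V E a b = resistance V E b a"
proof -
  obtain x y where x: "is_unit_potential V E a b x" and y: "is_unit_potential V E b a y"
    using unit_potential_exists assms by metis
  show ?thesis
    using resistance_eq[OF x assms] resistance_eq[OF y assms(2,1)]
      unit_potential_reciprocity[OF x y assms assms(2,1)] by simp
qed

lemma unit_potential_diff_eq_resistances:
  assumes x: "is_unit_potential V E a b x" and V: "a \<in> V" "b \<in> V" "c \<in> V" "d \<in> V"
  shows "x c - x d =
    (resistance V E a d + resistance V E b c - resistance V E a c - resistance V E b d) / 2"
proof -
  \<comment> \<open>Work with the potentials g v of unit currents from v to the reference vertex d;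
    by reciprocity, g v w - g v d is symmetric in v and w.\<close>
  define g where "g v = (SOME x. is_unit_potential V E v d x)" for v
  have g: "is_unit_potential V E v d (g v)" if "v \<in> V" for v
    unfolding g_def using unit_potential_exists[OF that \<open>d \<in> V\<close>] by (rule someI_ex)
  have pair: "is_unit_potential V E v w (\<lambda>u. g v u - g w u)" if "v \<in> V" "w \<in> V" for v w
    using g[OF that(1)] g[OF that(2)] by (simp add: is_unit_potential_def laplacian_diff)
  have recip: "g v w - g v d = g w v - g w d" if "v \<in> V" "w \<in> V" for v w
    using unit_potential_reciprocity[OF g g] that \<open>d \<in> V\<close> by blast
  have res: "resistance V E v w = g v v - g w v - g v w + g w w" if "v \<in> V" "w \<in> V" for v w
    using resistance_eq[OF pair that] that by simp
  have "x c - x d = (g a c - g b c) - (g a d - g b d)"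
    using unit_potential_unique[OF x pair] V by simp
  then show ?thesis
    using res[of a d] res[of b c] res[of a c] res[of b d] recip[of a c] recip[of b c]
      recip[of a d] recip[of b d] V
    by (simp add: field_simps)
qed

lemma unit_potential_drops_sum:
  assumes x: "is_unit_potential V E s s' x" and y: "is_unit_potential V E t t' y"
    and V: "s \<in> V" "t \<in> V" "s' \<in> V" "t' \<in> V"
  shows "(x s - x s') + (x t - x t') + (y s - y s') + (y t - y t')
    = resistance V E s s' + resistance V E s t' + resistance V E t s' + resistance V E t t'
      - resistance V E s t - resistance V E s' t'"
  using unit_potential_diff_eq_resistances[OF x V(1,3) V(1,3)]
    unit_potential_diff_eq_resistances[OF x V(1,3) V(2,4)]
    unit_potential_diff_eq_resistances[OF y V(2,4) V(1,3)]
    unit_potential_diff_eq_resistances[OF y V(2,4) V(2,4)] V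
    resistance_commute[of s' s] resistance_commute[of t' t] resistance_commute[of s' t]
    resistance_commute[of t' s] resistance_commute[of t s] resistance_commute[of t' s']
  by simp

end

lemma graph_edgesE:
  assumes "simple_graph V E" "e \<in> graph_edges V E"
  obtains a b where "e = {a, b}" "E a b" "a \<noteq> b" "a \<in> V" "b \<in> V"
  using assms unfolding simple_graph_def graph_edges_def by blast

lemma finite_graph_edges:
  assumes "simple_graph V E"
  shows "finite (graph_edges V E)"
proof (rule finite_subset)
  show "graph_edges V E \<subseteq> Pow V"
    using assms by (auto simp: graph_edges_def simple_graph_def)
  show "finite (Pow V)"
    using assms by (simp add: simple_graph_def)
qed

lemma sk_adj_commute: "sk_adj V E k w w' = sk_adj V E k w' w"
  by (cases "(V, E, k, w, w')" rule: sk_adj.cases) auto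

lemma sk_adj_Inl_iff:
  "sk_adj V E k (Inl u) w \<longleftrightarrow> (\<exists>e r. w = Inr (e, r) \<and> e \<in> graph_edges V E \<and> r < k \<and> u \<in> e)"
  by (cases "(V, E, k, Inl u :: 'a + 'a set \<times> nat, w)" rule: sk_adj.cases) auto

lemma sk_adj_Inr_iff:
  "sk_adj V E k (Inr (e, r)) w \<longleftrightarrow> (\<exists>u. w = Inl u \<and> e \<in> graph_edges V E \<and> r < k \<and> u \<in> e)"
  by (cases w) auto

lemma sk_simple_graph:
  assumes "simple_graph V E"
  shows "simple_graph (sk_verts V E k) (sk_adj V E k)"
proof -
  have "sk_new V E k \<subseteq> Inr ` (graph_edges V E \<times> {..<k})"
    by (auto simp: sk_new_def)
  then have "finite (sk_new V E k)"
    by (rule finite_subset) (simp add: finite_graph_edges[OF assms])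
  then have "finite (sk_verts V E k)"
    using assms by (simp add: sk_verts_def simple_graph_def)
  moreover have "w \<in> sk_verts V E k" if "sk_adj V E k w w'" for w w'
    using that assms
    by (cases "(V, E, k, w, w')" rule: sk_adj.cases)
      (auto simp: sk_verts_def sk_new_def elim: graph_edgesE)
  moreover have "\<not> sk_adj V E k w w" for w
    by (cases "(V, E, k, w, w)" rule: sk_adj.cases) auto
  ultimately show ?thesis
    unfolding simple_graph_def using sk_adj_commute by metis
qed

lemma sk_connected_graph:
  assumes "simple_graph V E" "connected_graph V E" "0 < k"
  shows "connected_graph (sk_verts V E k) (sk_adj V E k)"
proof -
  let ?A = "sk_adj V E k"
  have old: "?A\<^sup>*\<^sup>* (Inl a) (Inl b)" if "E\<^sup>*\<^sup>* a b" for a b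
    using that
  proof (induction rule: rtranclp_induct)
    case (step w v)
    then have "{w, v} \<in> graph_edges V E"
      by (auto simp: graph_edges_def)
    then have "?A (Inl w) (Inr ({w, v}, 0))" "?A (Inr ({w, v}, 0)) (Inl v)"
      using \<open>0 < k\<close> by auto
    then show ?case
      using step.IH by (meson rtranclp.rtrancl_into_rtrancl)
  qed simp
  have reach_old: "\<exists>u\<in>V. ?A\<^sup>*\<^sup>* w (Inl u) \<and> ?A\<^sup>*\<^sup>* (Inl u) w" if w: "w \<in> sk_verts V E k" for w
  proof (cases w)
    case (Inl u)
    then show ?thesis using w by (auto simp: sk_verts_def sk_new_def)
  next
    case (Inr er)
    then obtain e r where er: "w = Inr (e, r)" "e \<in> graph_edges V E" "r < k"
      using w by (cases er) (auto simp: sk_verts_def sk_new_def)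
    then obtain a b where "e = {a, b}" "a \<in> V"
      using assms(1) by (auto elim: graph_edgesE)
    then have "?A w (Inl a)" "?A (Inl a) w"
      using er by auto
    then show ?thesis
      using \<open>a \<in> V\<close> by blast
  qed
  show ?thesis
    unfolding connected_graph_def
  proof (intro conjI ballI)
    show "sk_verts V E k \<noteq> {}"
      using assms(2) by (auto simp: connected_graph_def sk_verts_def)
    fix w w' assume "w \<in> sk_verts V E k" "w' \<in> sk_verts V E k"
    then obtain u u' where "u \<in> V" "?A\<^sup>*\<^sup>* w (Inl u)" "u' \<in> V" "?A\<^sup>*\<^sup>* (Inl u') w'"
      using reach_old by metis
    moreover have "?A\<^sup>*\<^sup>* (Inl u) (Inl u')"
      using old assms(2) \<open>u \<in> V\<close> \<open>u' \<in> V\<close> by (auto simp: connected_graph_def)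
    ultimately show "?A\<^sup>*\<^sup>* w w'"
      by (meson rtranclp_trans)
  qed
qed

lemma sk_neighbours_Inl:
  assumes "simple_graph V E" "u \<in> V"
  shows "bij_betw (\<lambda>(v, r). Inr ({u, v}, r)) ({v\<in>V. E u v} \<times> {..<k})
    {w \<in> sk_verts V E k. sk_adj V E k (Inl u) w}"
proof (rule bij_betw_imageI)
  show "inj_on (\<lambda>(v, r). Inr ({u, v}, r)) ({v\<in>V. E u v} \<times> {..<k})"
    using assms(1) by (auto simp: inj_on_def simple_graph_def doubleton_eq_iff)
  have "\<exists>v. e = {u, v} \<and> v \<in> V \<and> E u v" if e: "e \<in> graph_edges V E" "u \<in> e" for e
  proof -
    obtain a b where ab: "e = {a, b}" "E a b" "a \<noteq> b" "a \<in> V" "b \<in> V"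
      by (rule graph_edgesE[OF assms(1) e(1)])
    show ?thesis
    proof (cases "u = a")
      case True
      then show ?thesis using ab by blast
    next
      case False
      then have "u = b" "E b a"
        using e(2) ab assms(1) by (auto simp: simple_graph_def)
      then show ?thesis
        using ab by (intro exI[of _ a]) (auto simp: insert_commute)
    qed
  qed
  then have "w \<in> (\<lambda>(v, r). Inr ({u, v}, r)) ` ({v\<in>V. E u v} \<times> {..<k})"
    if "sk_adj V E k (Inl u) w" for w
    using that unfolding sk_adj_Inl_iff by force
  moreover have "{u, v} \<in> graph_edges V E" if "E u v" for v
    using that by (auto simp: graph_edges_def)
  ultimately show "(\<lambda>(v, r). Inr ({u, v}, r)) ` ({v\<in>V. E u v} \<times> {..<k})
      = {w \<in> sk_verts V E k. sk_adj V E k (Inl u) w}"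
    by (auto simp: sk_verts_def sk_new_def)
qed

lemma sk_neighbours_Inr:
  assumes "simple_graph V E" "Inr (e, r) \<in> sk_new V E k"
  shows "{w \<in> sk_verts V E k. sk_adj V E k (Inr (e, r)) w} = Inl ` e"
  using assms by (auto simp: sk_adj_Inr_iff sk_new_def sk_verts_def elim!: graph_edgesE)

definition sk_lift :: "('a \<Rightarrow> real) \<Rightarrow> ('a + 'a set \<times> nat \<Rightarrow> real) \<Rightarrow> 'a + 'a set \<times> nat \<Rightarrow> real"
  where "sk_lift p d w = (case w of Inl u \<Rightarrow> p u | Inr (e, r) \<Rightarrow> (\<Sum>x\<in>e. p x) / 2 + d w)"

lemma sk_lift_Inl [simp]: "sk_lift p d (Inl u) = p u"
  by (simp add: sk_lift_def)

lemma sk_lift_Inr [simp]: "sk_lift p d (Inr (e, r)) = (\<Sum>x\<in>e. p x) / 2 + d (Inr (e, r))"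
  by (simp add: sk_lift_def)

lemma laplacian_sk_lift_Inl:
  assumes "simple_graph V E" "u \<in> V"
  shows "laplacian (sk_verts V E k) (sk_adj V E k) (sk_lift p d) (Inl u)
    = real k / 2 * laplacian V E p u - (\<Sum>w\<in>{w \<in> sk_verts V E k. sk_adj V E k (Inl u) w}. d w)"
proof -
  let ?N = "{w \<in> sk_verts V E k. sk_adj V E k (Inl u) w}"
  have loop_free: "E u v \<Longrightarrow> u \<noteq> v" for v
    using assms(1) by (auto simp: simple_graph_def)
  have "laplacian (sk_verts V E k) (sk_adj V E k) (sk_lift p d) (Inl u)
      = (\<Sum>w\<in>?N. (p u - sk_lift p (\<lambda>_. 0) w) - d w)"
    unfolding laplacian_def by (rule sum.cong) (auto simp: sk_adj_Inl_iff)
  also have "\<dots> = (\<Sum>w\<in>?N. p u - sk_lift p (\<lambda>_. 0) w) - (\<Sum>w\<in>?N. d w)"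
    by (rule sum_subtractf)
  also have "(\<Sum>w\<in>?N. p u - sk_lift p (\<lambda>_. 0) w)
      = (\<Sum>(v, r)\<in>{v\<in>V. E u v} \<times> {..<k}. (p u - p v) / 2)"
    by (subst sum.reindex_bij_betw[OF sk_neighbours_Inl[OF assms], symmetric])
      (auto intro!: sum.cong simp: loop_free field_simps)
  also have "\<dots> = real k / 2 * laplacian V E p u"
    by (simp add: sum.cartesian_product[symmetric] laplacian_def sum_distrib_left)
  finally show ?thesis .
qed

lemma laplacian_sk_lift_Inr:
  assumes "simple_graph V E" "Inr (e, r) \<in> sk_new V E k"
  shows "laplacian (sk_verts V E k) (sk_adj V E k) (sk_lift p d) (Inr (e, r)) = 2 * d (Inr (e, r))"
proof -
  obtain a b where "e = {a, b}" "a \<noteq> b"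
    using assms by (auto simp: sk_new_def elim: graph_edgesE)
  then show ?thesis
    unfolding laplacian_def sk_neighbours_Inr[OF assms] by (simp add: field_simps)
qed

text \<open>An old vertex a is treated as the degenerate pair (a, a), so that a single formula covers
  old and new vertices alike.\<close>
definition sk_ends :: "'a set \<Rightarrow> ('a \<Rightarrow> 'a \<Rightarrow> bool) \<Rightarrow> nat \<Rightarrow> 'a + 'a set \<times> nat \<Rightarrow> 'a \<Rightarrow> 'a \<Rightarrow> bool"
  where "sk_ends V E k w s t \<longleftrightarrow> (s \<in> V \<and> w = Inl s \<and> t = s)
    \<or> (w \<in> sk_new V E k \<and> {x. sk_adj V E k w x} = {Inl s, Inl t})"

lemma sk_new_neighbours_eq:
  assumes "simple_graph V E" "w \<in> sk_new V E k" "{x. sk_adj V E k w x} = {Inl s, Inl t}"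
  obtains r where "w = Inr ({s, t}, r)" "{s, t} \<in> graph_edges V E" "r < k" "s \<noteq> t"
proof -
  obtain e r where w: "w = Inr (e, r)" "e \<in> graph_edges V E" "r < k"
    using assms(2) by (auto simp: sk_new_def)
  then have "Inl ` e = Inl ` {s, t}"
    using assms(3) by (auto simp: sk_adj_Inr_iff)
  then have "e = {s, t}"
    by (simp only: inj_image_eq_iff[OF inj_Inl])
  moreover have "s \<noteq> t"
    using graph_edgesE[OF assms(1) w(2)] \<open>e = {s, t}\<close> by (metis doubleton_eq_iff)
  ultimately show ?thesis
    using that w by blast
qed

lemma sk_ends_cases:
  assumes "simple_graph V E" "sk_ends V E k w s t"
  obtains (old) "w = Inl s" "t = s" "s \<in> V"
    | (new) r where "w = Inr ({s, t}, r)" "{s, t} \<in> graph_edges V E" "r < k" "s \<noteq> t"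
      "s \<in> V" "t \<in> V"
proof -
  have "s \<in> V \<and> t \<in> V" if "{s, t} \<in> graph_edges V E"
    using graph_edgesE[OF assms(1) that] by (metis doubleton_eq_iff)
  then show ?thesis
    using assms that sk_new_neighbours_eq[OF assms(1)] unfolding sk_ends_def by metis
qed

lemma sk_ends_in_vertices:
  assumes "simple_graph V E" "sk_ends V E k w s t"
  shows "w \<in> sk_verts V E k \<and> s \<in> V \<and> t \<in> V"
  using sk_ends_cases[OF assms] by cases (auto simp: sk_verts_def sk_new_def)

lemma sk_lift_sk_ends:
  assumes "simple_graph V E" "sk_ends V E k w s t"
  shows "sk_lift p d w = (p s + p t) / 2 + (if isl w then 0 else d w)"
  using sk_ends_cases[OF assms] by cases auto

lemma sk_ends_indicator:
  assumes "simple_graph V E" "sk_ends V E k w s t"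
  shows "(if Inl u = w then 1 else 0) + (if sk_adj V E k (Inl u) w then 1 else 0) / 2
    = ((if u = s then 1 else 0) + (if u = t then 1 else 0)) / (2 :: real)"
  using sk_ends_cases[OF assms] by cases auto

context resistor_network
begin

lemma sk_lift_is_unit_potential:
  assumes "0 < k" and i: "sk_ends V E k i s t" and j: "sk_ends V E k j s' t'"
    and p: "\<forall>u\<in>V. laplacian V E p u = ((if u = s then 1 else 0) + (if u = t then 1 else 0)
      - (if u = s' then 1 else 0) - (if u = t' then 1 else 0)) / real k"
  shows "is_unit_potential (sk_verts V E k) (sk_adj V E k) i j
    (sk_lift p (\<lambda>w. ((if w = i then 1 else 0) - (if w = j then 1 else 0)) / 2))"
    (is "is_unit_potential _ _ i j (sk_lift p ?d)")
  unfolding is_unit_potential_def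
proof
  fix w assume w: "w \<in> sk_verts V E k"
  have ij: "i \<in> sk_verts V E k" "j \<in> sk_verts V E k"
    using sk_ends_in_vertices[OF simple] i j by blast+
  show "laplacian (sk_verts V E k) (sk_adj V E k) (sk_lift p ?d) w
      = (if w = i then 1 else 0) - (if w = j then 1 else 0)"
  proof (cases w)
    case (Inl u)
    then have u: "u \<in> V"
      using w by (auto simp: sk_verts_def sk_new_def)
    let ?N = "{w \<in> sk_verts V E k. sk_adj V E k (Inl u) w}"
    have "finite ?N"
      using sk_simple_graph[OF simple] by (simp add: simple_graph_def)
    then have "(\<Sum>w\<in>?N. ?d w)
        = ((if sk_adj V E k (Inl u) i then 1 else 0) - (if sk_adj V E k (Inl u) j then 1 else 0)) / 2"
      using ij by (simp add: sum_divide_distrib[symmetric] sum_subtractf)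
    moreover have "real k / 2 * laplacian V E p u = ((if u = s then 1 else 0) + (if u = t then 1 else 0)
        - (if u = s' then 1 else 0) - (if u = t' then 1 else 0)) / 2"
      using p u \<open>0 < k\<close> by simp
    ultimately have "laplacian (sk_verts V E k) (sk_adj V E k) (sk_lift p ?d) (Inl u)
        = ((if u = s then 1 else 0) + (if u = t then 1 else 0)) / 2
          - (if sk_adj V E k (Inl u) i then 1 else 0) / 2
          - (((if u = s' then 1 else 0) + (if u = t' then 1 else 0)) / 2
          - (if sk_adj V E k (Inl u) j then 1 else 0) / 2)"
      using laplacian_sk_lift_Inl[OF simple u, of k p ?d] by (simp add: field_simps)
    then show ?thesis
      unfolding Inl
      using sk_ends_indicator[OF simple i, of u] sk_ends_indicator[OF simple j, of u]
      by (simp add: field_simps)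
  next
    case (Inr er)
    then obtain e r where "w = Inr (e, r)" "Inr (e, r) \<in> sk_new V E k"
      using w by (cases er) (auto simp: sk_verts_def)
    then show ?thesis
      using laplacian_sk_lift_Inr[OF simple] by simp
  qed
qed

lemma resistance_sk:
  assumes "0 < k" "i \<noteq> j" and i: "sk_ends V E k i s t" and j: "sk_ends V E k j s' t'"
  shows "resistance (sk_verts V E k) (sk_adj V E k) i j =
      (if isl i then 0 else 1 / 2) + (if isl j then 0 else 1 / 2)
      + (resistance V E s s' + resistance V E s t' + resistance V E t s' + resistance V E t t'
         - resistance V E s t - resistance V E s' t') / (2 * real k)"
proof -
  interpret S: resistor_network "sk_verts V E k" "sk_adj V E k"
    using sk_simple_graph[OF simple] sk_connected_graph[OF simple connected \<open>0 < k\<close>]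
    by unfold_locales
  have V: "s \<in> V" "t \<in> V" "s' \<in> V" "t' \<in> V"
    using sk_ends_in_vertices[OF simple] i j by blast+
  obtain x y where x: "is_unit_potential V E s s' x" and y: "is_unit_potential V E t t' y"
    using unit_potential_exists V by metis
  define p where "p u = 1 / real k * (x u + y u)" for u
  have "laplacian V E p u = 1 / real k * (laplacian V E x u + laplacian V E y u)" for u
    unfolding p_def by (simp only: laplacian_cmult laplacian_add)
  then have "\<forall>u\<in>V. laplacian V E p u = ((if u = s then 1 else 0) + (if u = t then 1 else 0)
      - (if u = s' then 1 else 0) - (if u = t' then 1 else 0)) / real k"
    using x y by (simp add: is_unit_potential_def add_divide_distrib diff_divide_distrib)
  from sk_lift_is_unit_potential[OF \<open>0 < k\<close> i j this]
  have "resistance (sk_verts V E k) (sk_adj V E k) i j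
      = sk_lift p (\<lambda>w. ((if w = i then 1 else 0) - (if w = j then 1 else 0)) / 2) i
      - sk_lift p (\<lambda>w. ((if w = i then 1 else 0) - (if w = j then 1 else 0)) / 2) j"
    using S.resistance_eq sk_ends_in_vertices[OF simple] i j by blast
  also have "\<dots> = (p s + p t - p s' - p t') / 2
      + (if isl i then 0 else 1 / 2) + (if isl j then 0 else 1 / 2)"
    unfolding sk_lift_sk_ends[OF simple i] sk_lift_sk_ends[OF simple j]
    using \<open>i \<noteq> j\<close> by (simp add: field_simps)
  finally have lift: "resistance (sk_verts V E k) (sk_adj V E k) i j
      = (p s + p t - p s' - p t') / 2 + (if isl i then 0 else 1 / 2) + (if isl j then 0 else 1 / 2)" .
  have "p s + p t - p s' - p t'
      = ((x s - x s') + (x t - x t') + (y s - y s') + (y t - y t')) / real k"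
    using \<open>0 < k\<close> by (simp add: p_def field_simps)
  also have "\<dots> = (resistance V E s s' + resistance V E s t' + resistance V E t s'
      + resistance V E t t' - resistance V E s t - resistance V E s' t') / real k"
    using unit_potential_drops_sum[OF x y V] by simp
  finally show ?thesis
    unfolding lift using \<open>0 < k\<close> by (simp add: field_simps)
qed

end

theorem corollary4p3:
  fixes V :: "'a set" and E :: "'a \<Rightarrow> 'a \<Rightarrow> bool" and k :: nat
    and i j :: "'a + 'a set \<times> nat"
  assumes "simple_graph V E" and "connected_graph V E" and "k \<ge> 1"
    and "i \<in> sk_verts V E k" and "j \<in> sk_verts V E k" and "i \<noteq> j"
  shows "(\<forall>a b. a \<in> V \<longrightarrow> b \<in> V \<longrightarrow> i = Inl a \<longrightarrow> j = Inl b \<longrightarrow>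
            resistance (sk_verts V E k) (sk_adj V E k) i j = 2 / real k * resistance V E a b)
       \<and> (\<forall>s t b. i \<in> sk_new V E k \<longrightarrow> b \<in> V \<longrightarrow> j = Inl b \<longrightarrow>
            {w. sk_adj V E k i w} = {Inl s, Inl t} \<longrightarrow>
            resistance (sk_verts V E k) (sk_adj V E k) i j =
              (real k + 2 * resistance V E s b + 2 * resistance V E t b - resistance V E s t)
                / (2 * real k))
       \<and> (\<forall>s t p q. i \<in> sk_new V E k \<longrightarrow> j \<in> sk_new V E k \<longrightarrow>
            {w. sk_adj V E k i w} = {Inl s, Inl t} \<longrightarrow>
            {w. sk_adj V E k j w} = {Inl p, Inl q} \<longrightarrow>
            resistance (sk_verts V E k) (sk_adj V E k) i j =
              (2 * real k + resistance V E s p + resistance V E s q + resistance V E t p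
                 + resistance V E t q - resistance V E p q - resistance V E s t)
                / (2 * real k))"
proof -
  interpret resistor_network V E
    by (rule resistor_network.intro) fact+
  have k: "0 < k"
    using \<open>k \<ge> 1\<close> by simp
  have old: "sk_ends V E k w a a" if "w = Inl a" "a \<in> V" for w a
    using that by (simp add: sk_ends_def)
  have new: "sk_ends V E k w s t"
    if "w \<in> sk_new V E k" "{x. sk_adj V E k w x} = {Inl s, Inl t}" for w s t
    using that by (simp add: sk_ends_def)
  have not_isl: "\<not> isl w" if "w \<in> sk_new V E k" for w
    using that by (auto simp: sk_new_def)
  note resistance = resistance_sk[OF k \<open>i \<noteq> j\<close>]
  show ?thesis
    apply (intro conjI allI impI)
    subgoal premises prems for a b
      using resistance[OF old[OF prems(3,1)] old[OF prems(4,2)]] prems(3,4) k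
      by (simp add: field_simps)
    subgoal premises prems for s t b
      using resistance[OF new[OF prems(1,4)] old[OF prems(3,2)]] not_isl[OF prems(1)] prems(3) k
      by (simp add: field_simps)
    subgoal premises prems for s t p q
      using resistance[OF new[OF prems(1,3)] new[OF prems(2,4)]]
        not_isl[OF prems(1)] not_isl[OF prems(2)] k
      by (simp add: field_simps)
    done
qed

end
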